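(* Let $P$ be a preorder containing an element which is $\ge$ every element of $P$, and let $k\ge 0$. Define the $k$-fold multisemisimplicial set $A$ by \[ A_{\mathbf n}=\mathrm{Map}_{\mathrm{preorder}}(U(\Delta^{\mathbf n}),P),\qquad \mathbf n=(n_1,\dots,n_k), \] with face maps given by restriction along the coface inclusions. Then (i) $A$ has compatible degeneracies, and (ii) the geometric realization $|A|$ is weakly equivalent to a point.
   Context: $\Delta_{\mathrm{inj}}$ is the category of sets $\{0,\dots,n\}$ and monotone injections; a $k$-fold multisemisimplicial set is a functor $(\Delta_{\mathrm{inj}}^{\mathrm{op}})^{\times k}\to\mathrm{Set}$. For a multi-index $\mathbf n$, $\Delta^{\mathbf n}=\Delta^{n_1}\times\cdots\times\Delta^{n_k}$ with its product cell structure, and $U(\Delta^{\mathbf n})$ is its set of cells, preordered (partially ordered) by inclusion; a preorder is a set with a reflexive transitive relation, and $\mathrm{Map}_{\mathrm{preorder}}$ denotes order-preserving maps. A multisemisimplicial set has compatible degeneracies if it is the underlying multisemisimplicial set of some multisimplicial set. *)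

theory Defs
  imports "HOL-Analysis.Analysis" "HOL-Homology.Simplices"
begin

definition delta_mor :: "nat \<Rightarrow> nat \<Rightarrow> (nat \<Rightarrow> nat) \<Rightarrow> bool" where
  "delta_mor m n \<theta> \<longleftrightarrow> \<theta> \<in> {..m} \<rightarrow>\<^sub>E {..n} \<and> mono_on {..m} \<theta>"

definition delta_inj_mor :: "nat \<Rightarrow> nat \<Rightarrow> (nat \<Rightarrow> nat) \<Rightarrow> bool" where
  "delta_inj_mor m n \<theta> \<longleftrightarrow> delta_mor m n \<theta> \<and> inj_on \<theta> {..m}"

text \<open>Multi-indices are lists of length k; morphisms of the k-fold product categories.\<close>
definition multi_mor :: "nat list \<Rightarrow> nat list \<Rightarrow> (nat \<Rightarrow> nat) list \<Rightarrow> bool" where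
  "multi_mor m n \<theta>s \<longleftrightarrow> length m = length n \<and> length \<theta>s = length n \<and>
     (\<forall>i<length n. delta_mor (m!i) (n!i) (\<theta>s!i))"

definition multi_inj_mor :: "nat list \<Rightarrow> nat list \<Rightarrow> (nat \<Rightarrow> nat) list \<Rightarrow> bool" where
  "multi_inj_mor m n \<theta>s \<longleftrightarrow> length m = length n \<and> length \<theta>s = length n \<and>
     (\<forall>i<length n. delta_inj_mor (m!i) (n!i) (\<theta>s!i))"

definition multi_id :: "nat list \<Rightarrow> (nat \<Rightarrow> nat) list" where
  "multi_id n = map (\<lambda>j. restrict id {..j}) n"

definition multi_comp :: "nat list \<Rightarrow> (nat \<Rightarrow> nat) list \<Rightarrow> (nat \<Rightarrow> nat) list \<Rightarrow> (nat \<Rightarrow> nat) list" where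
  "multi_comp l \<theta>s \<phi>s = map (\<lambda>i. restrict ((\<theta>s!i) \<circ> (\<phi>s!i)) {..l!i}) [0..<length l]"

text \<open>A k-fold multisemisimplicial set is given by sets X n (length n = k) and face
  operators d m n \<theta>s : X n -> X m for \<theta>s : m -> n in Delta_inj^k.
  It has compatible degeneracies if the face operators extend to a functor on
  (Delta^op)^k, i.e. it is the underlying multisemisimplicial set of a multisimplicial set.\<close>
definition has_compatible_degeneracies ::
  "nat \<Rightarrow> (nat list \<Rightarrow> 'x set) \<Rightarrow> (nat list \<Rightarrow> nat list \<Rightarrow> (nat \<Rightarrow> nat) list \<Rightarrow> 'x \<Rightarrow> 'x) \<Rightarrow> bool" where
  "has_compatible_degeneracies k X d \<longleftrightarrow>
    (\<exists>F :: nat list \<Rightarrow> nat list \<Rightarrow> (nat \<Rightarrow> nat) list \<Rightarrow> 'x \<Rightarrow> 'x.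
      (\<forall>m n \<theta>s x. length n = k \<and> multi_mor m n \<theta>s \<and> x \<in> X n \<longrightarrow> F m n \<theta>s x \<in> X m) \<and>
      (\<forall>n x. length n = k \<and> x \<in> X n \<longrightarrow> F n n (multi_id n) x = x) \<and>
      (\<forall>l m n \<theta>s \<phi>s x. length n = k \<and> multi_mor m n \<theta>s \<and> multi_mor l m \<phi>s \<and> x \<in> X n \<longrightarrow>
          F l n (multi_comp l \<theta>s \<phi>s) x = F l m \<phi>s (F m n \<theta>s x)) \<and>
      (\<forall>m n \<theta>s x. length n = k \<and> multi_inj_mor m n \<theta>s \<and> x \<in> X n \<longrightarrow> F m n \<theta>s x = d m n \<theta>s x))"

definition quot_topology :: "'a topology \<Rightarrow> ('a \<times> 'a) set \<Rightarrow> 'a set topology" where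
  "quot_topology X E = topology (\<lambda>U. U \<subseteq> topspace X // E \<and> openin X {x \<in> topspace X. E``{x} \<in> U})"

lemma istopology_quot: "istopology (\<lambda>U. U \<subseteq> topspace X // E \<and> openin X {x \<in> topspace X. E``{x} \<in> U})"
proof -
  have 1: "{x \<in> topspace X. E``{x} \<in> S \<inter> T} = {x \<in> topspace X. E``{x} \<in> S} \<inter> {x \<in> topspace X. E``{x} \<in> T}" for S T
    by auto
  have 2: "{x \<in> topspace X. E``{x} \<in> \<Union>K} = \<Union>((\<lambda>S. {x \<in> topspace X. E``{x} \<in> S}) ` K)" for K
    by auto
  show ?thesis
    unfolding istopology_def
    by (auto simp only: 1 2 intro!: openin_Int openin_Union)
qed

definition prod_simplex :: "nat list \<Rightarrow> (nat \<Rightarrow> (nat \<Rightarrow> real)) topology" where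
  "prod_simplex n = product_topology (\<lambda>i. subtopology (powertop_real UNIV) (standard_simplex (n!i))) {..<length n}"

text \<open>The affine map \<Delta>^m -> \<Delta>^n induced by \<theta> : [m] -> [n].\<close>
definition simplex_push :: "(nat \<Rightarrow> nat) \<Rightarrow> nat \<Rightarrow> (nat \<Rightarrow> real) \<Rightarrow> (nat \<Rightarrow> real)" where
  "simplex_push \<theta> m y = (\<lambda>j. \<Sum>i\<le>m. if \<theta> i = j then y i else 0)"

definition multi_push :: "nat list \<Rightarrow> (nat \<Rightarrow> nat) list \<Rightarrow> (nat \<Rightarrow> (nat \<Rightarrow> real)) \<Rightarrow> (nat \<Rightarrow> (nat \<Rightarrow> real))" where
  "multi_push m \<theta>s y = restrict (\<lambda>i. simplex_push (\<theta>s!i) (m!i) (y i)) {..<length m}"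

definition realization_total ::
  "nat \<Rightarrow> (nat list \<Rightarrow> 'x set) \<Rightarrow> ((nat list \<times> 'x) \<times> (nat \<Rightarrow> (nat \<Rightarrow> real))) topology" where
  "realization_total k X = sum_topology (\<lambda>(n, x). prod_simplex n) {(n, x). length n = k \<and> x \<in> X n}"

definition realization_rel ::
  "nat \<Rightarrow> (nat list \<Rightarrow> 'x set) \<Rightarrow> (nat list \<Rightarrow> nat list \<Rightarrow> (nat \<Rightarrow> nat) list \<Rightarrow> 'x \<Rightarrow> 'x)
     \<Rightarrow> (((nat list \<times> 'x) \<times> (nat \<Rightarrow> (nat \<Rightarrow> real))) \<times> ((nat list \<times> 'x) \<times> (nat \<Rightarrow> (nat \<Rightarrow> real)))) set" where
  "realization_rel k X d =
     {(((m, d m n \<theta>s x), y), ((n, x), multi_push m \<theta>s y)) | m n \<theta>s x y.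
        length n = k \<and> multi_inj_mor m n \<theta>s \<and> x \<in> X n \<and> y \<in> topspace (prod_simplex m)}"

text \<open>|X| = (coproduct over n, x \<in> X_n of \<Delta>^n) / ((d \<theta> x, y) ~ (x, \<theta>_* y)).\<close>
definition geometric_realization ::
  "nat \<Rightarrow> (nat list \<Rightarrow> 'x set) \<Rightarrow> (nat list \<Rightarrow> nat list \<Rightarrow> (nat \<Rightarrow> nat) list \<Rightarrow> 'x \<Rightarrow> 'x)
     \<Rightarrow> ((nat list \<times> 'x) \<times> (nat \<Rightarrow> (nat \<Rightarrow> real))) set topology" where
  "geometric_realization k X d =
     quot_topology (realization_total k X) ((realization_rel k X d \<union> (realization_rel k X d)\<inverse>)\<^sup>*)"

text \<open>Weakly equivalent to a point: nonempty and all homotopy groups (at all base points)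
  vanish, i.e. every map from a sphere is null-homotopic.\<close>
definition weakly_contractible_space :: "'a topology \<Rightarrow> bool" where
  "weakly_contractible_space X \<longleftrightarrow> topspace X \<noteq> {} \<and>
     (\<forall>n f. continuous_map (nsphere n) X f \<longrightarrow> (\<exists>c. homotopic_with (\<lambda>_. True) (nsphere n) X f (\<lambda>_. c)))"

text \<open>Cells of \<Delta>^{n_1} x ... x \<Delta>^{n_k}: tuples of nonempty faces, ordered by inclusion.\<close>
definition cells :: "nat list \<Rightarrow> nat set list set" where
  "cells n = {c. length c = length n \<and> (\<forall>i<length n. c!i \<noteq> {} \<and> c!i \<subseteq> {..n!i})}"

definition cell_le :: "nat set list \<Rightarrow> nat set list \<Rightarrow> bool" where
  "cell_le c c' \<longleftrightarrow> length c = length c' \<and> (\<forall>i<length c. c!i \<subseteq> c'!i)"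

text \<open>A_n = Map_preorder(U(\<Delta>^n), P), with P the preorder on the type 'p.\<close>
definition msA :: "nat list \<Rightarrow> (nat set list \<Rightarrow> 'p::preorder) set" where
  "msA n = {a \<in> cells n \<rightarrow>\<^sub>E UNIV. \<forall>c\<in>cells n. \<forall>c'\<in>cells n. cell_le c c' \<longrightarrow> a c \<le> a c'}"

definition msA_face :: "nat list \<Rightarrow> nat list \<Rightarrow> (nat \<Rightarrow> nat) list \<Rightarrow> (nat set list \<Rightarrow> 'p) \<Rightarrow> (nat set list \<Rightarrow> 'p)" where
  "msA_face m n \<theta>s a = restrict (\<lambda>c. a (map2 (`) \<theta>s c)) (cells m)"

end

theory Submission
  imports Defs
begin

text \<open>(i) The formula defining the face maps makes sense for arbitrary monotone maps, not only
  injections: a monotone map of simplices still sends cells to cells and preserves inclusion, and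
  restriction along a composite is the composite of restrictions. So the face maps themselves
  extend to a functor on (\<Delta>^op)^k.

  (ii) Let \<open>\<top>\<close> be the top element of \<open>P\<close>. Every \<open>a \<in> A_n\<close> extends to its cone \<open>a+ \<in> A_(n+1)\<close>
  (adjoin a new last vertex in every factor, and send every cell containing a new vertex to \<open>\<top>\<close>);
  \<open>a\<close> is the face of \<open>a+\<close> opposite the new vertices, and coning commutes with face maps. Hence the
  straight-line contraction of every product of simplices towards its new vertices is compatible
  with the identifications of the realization and descends to a contraction of \<open>|A|\<close> onto the
  point represented by the constant map to \<open>\<top>\<close> on \<open>\<Delta>^0 \<times> \<dots> \<times> \<Delta>^0\<close>.\<close>

section \<open>Compatible degeneracies\<close>

lemma multi_inj_mor_imp_multi_mor: "multi_inj_mor m n \<theta>s \<Longrightarrow> multi_mor m n \<theta>s"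
  unfolding multi_inj_mor_def multi_mor_def delta_inj_mor_def by auto

lemma map2_image_in_cells:
  assumes "length \<theta>s = length n" "length m = length n"
    and "\<And>i. i < length n \<Longrightarrow> (\<theta>s!i) ` {..m!i} \<subseteq> {..n!i}"
    and "c \<in> cells m"
  shows "map2 (`) \<theta>s c \<in> cells n"
  using assms unfolding cells_def by (auto 0 3 simp: subset_iff)

lemma multi_mor_map2_image_in_cells:
  "multi_mor m n \<theta>s \<Longrightarrow> c \<in> cells m \<Longrightarrow> map2 (`) \<theta>s c \<in> cells n"
  unfolding multi_mor_def by (rule map2_image_in_cells) (auto simp: delta_mor_def PiE_iff)

lemma cell_le_map2_image:
  "cell_le c c' \<Longrightarrow> length \<theta>s = length c \<Longrightarrow> cell_le (map2 (`) \<theta>s c) (map2 (`) \<theta>s c')"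
  unfolding cell_le_def by (auto simp: image_mono)

lemma map2_image_multi_id: "c \<in> cells n \<Longrightarrow> map2 (`) (multi_id n) c = c"
  unfolding cells_def multi_id_def by (intro nth_equalityI) (auto simp: image_restrict_eq)

lemma msA_undefined: "a \<in> msA n \<Longrightarrow> c \<notin> cells n \<Longrightarrow> a c = undefined"
  by (simp add: msA_def PiE_def extensional_def)

lemma msA_face_in_msA:
  assumes "multi_mor m n \<theta>s" "a \<in> msA n"
  shows "msA_face m n \<theta>s a \<in> msA m"
proof -
  have "length c = length \<theta>s" if "c \<in> cells m" for c
    using assms(1) that unfolding multi_mor_def cells_def by auto
  then show ?thesis
    using assms(2) unfolding msA_def msA_face_def
    by (auto simp: multi_mor_map2_image_in_cells[OF assms(1)] cell_le_map2_image)
qed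

lemma msA_face_multi_id:
  assumes "a \<in> msA n"
  shows "msA_face n n (multi_id n) a = a"
proof
  fix c
  show "msA_face n n (multi_id n) a c = a c"
    using assms by (cases "c \<in> cells n") (simp_all add: msA_face_def map2_image_multi_id msA_undefined)
qed

lemma msA_face_multi_comp:
  assumes "multi_mor m n \<theta>s" "multi_mor l m \<phi>s"
  shows "msA_face l n (multi_comp l \<theta>s \<phi>s) a = msA_face l m \<phi>s (msA_face m n \<theta>s a)"
proof
  fix c
  show "msA_face l n (multi_comp l \<theta>s \<phi>s) a c = msA_face l m \<phi>s (msA_face m n \<theta>s a) c"
  proof (cases "c \<in> cells l")
    case True
    have "map2 (`) (multi_comp l \<theta>s \<phi>s) c = map2 (`) \<theta>s (map2 (`) \<phi>s c)"
      using True assms unfolding cells_def multi_comp_def multi_mor_def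
      by (intro nth_equalityI) (auto simp: image_comp[symmetric] image_restrict_eq)
    then show ?thesis
      using True multi_mor_map2_image_in_cells[OF assms(2) True] by (simp add: msA_face_def)
  qed (simp add: msA_face_def)
qed

theorem has_compatible_degeneracies_msA: "has_compatible_degeneracies k msA msA_face"
  unfolding has_compatible_degeneracies_def
  by (rule exI[of _ msA_face])
     (auto intro: msA_face_in_msA msA_face_multi_id msA_face_multi_comp)

section \<open>Contractible quotient spaces\<close>

lemma openin_quot_topology:
  "openin (quot_topology X E) U \<longleftrightarrow> U \<subseteq> topspace X // E \<and> openin X {x \<in> topspace X. E``{x} \<in> U}"
  unfolding quot_topology_def using istopology_quot[of X E] by simp

lemma topspace_quot_topology: "topspace (quot_topology X E) = topspace X // E"
proof -
  have "{x \<in> topspace X. E``{x} \<in> topspace X // E} = topspace X"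
    by (auto simp: quotient_def)
  then have "openin (quot_topology X E) (topspace X // E)"
    by (simp add: openin_quot_topology)
  then have "topspace X // E \<subseteq> topspace (quot_topology X E)"
    by (rule openin_subset)
  moreover have "topspace (quot_topology X E) \<subseteq> topspace X // E"
    using openin_topspace[of "quot_topology X E"] unfolding openin_quot_topology by blast
  ultimately show ?thesis by blast
qed

lemma quotient_map_quot_topology: "quotient_map X (quot_topology X E) (\<lambda>x. E``{x})"
  unfolding quotient_map_def topspace_quot_topology
  by (auto simp: openin_quot_topology quotient_def)

lemma contractible_space_if_contracting_homotopy:
  assumes H: "continuous_map (prod_topology (top_of_set {0..1::real}) X) X H"
    and H0: "\<And>x. x \<in> topspace X \<Longrightarrow> H (0, x) = x"
    and H1: "\<And>x. x \<in> topspace X \<Longrightarrow> H (1, x) = c"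
  shows "contractible_space X"
proof -
  define h where "h = (\<lambda>(t, x). if x \<in> topspace X then H (t, x) else if t = 0 then x else c)"
  show ?thesis
    unfolding contractible_space_def homotopic_with_def
  proof (rule exI[of _ c], rule exI[of _ h], intro conjI allI ballI)
    show "continuous_map (prod_topology (top_of_set {0..1}) X) X h"
      by (rule continuous_map_eq[OF H]) (auto simp: h_def)
  qed (auto simp: h_def H0 H1)
qed

text \<open>The contraction descends because \<open>[0,1] \<times> -\<close> preserves quotient maps (\<open>[0,1]\<close> is locally
  compact Hausdorff).\<close>

lemma contractible_space_quot_topology:
  assumes E: "equiv UNIV E"
    and H: "continuous_map (prod_topology (top_of_set {0..1::real}) X) X H"
    and H_E: "\<And>t x x'. t \<in> {0..1} \<Longrightarrow> (x, x') \<in> E \<Longrightarrow> (H (t, x), H (t, x')) \<in> E"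
    and H0: "\<And>x. x \<in> topspace X \<Longrightarrow> (x, H (0, x)) \<in> E"
    and H1: "\<And>x. x \<in> topspace X \<Longrightarrow> (c, H (1, x)) \<in> E"
  shows "contractible_space (quot_topology X E)"
proof -
  let ?I = "top_of_set {0..1::real}"
  let ?Q = "quot_topology X E"
  let ?q = "\<lambda>x. E``{x}"
  have q: "quotient_map X ?Q ?q" by (rule quotient_map_quot_topology)
  have class_eq: "(x, y) \<in> E \<Longrightarrow> E``{x} = E``{y}" for x y
    using equiv_class_eq[OF E] .
  define HQ where "HQ = (\<lambda>(t, C). ?q (H (t, SOME x. x \<in> C \<inter> topspace X)))"
  have HQ_class: "HQ (t, ?q x) = ?q (H (t, x))" if "t \<in> {0..1}" "x \<in> topspace X" for t x
  proof -
    let ?x = "SOME x'. x' \<in> ?q x \<inter> topspace X"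
    have "?x \<in> ?q x \<inter> topspace X"
      by (rule someI[of _ x]) (use equiv_class_self[OF E UNIV_I, of x] that(2) in blast)
    then have "(H (t, x), H (t, ?x)) \<in> E"
      by (intro H_E that(1)) simp
    from class_eq[OF this] show ?thesis
      by (simp add: HQ_def)
  qed
  have "quotient_map (prod_topology ?I X) (prod_topology ?I ?Q) (\<lambda>(t, x). (t, ?q x))"
  proof (rule quotient_map_prod_right[OF _ _ q])
    show "locally_compact_space ?I"
      by (intro compact_imp_locally_compact_space compact_space_subtopology) simp
  qed (simp add: Hausdorff_space_subtopology)
  moreover have "continuous_map (prod_topology ?I X) ?Q (HQ \<circ> (\<lambda>(t, x). (t, ?q x)))"
    by (rule continuous_map_eq[OF continuous_map_compose[OF H quotient_imp_continuous_map[OF q]]])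
       (auto simp: HQ_class)
  ultimately have "continuous_map (prod_topology ?I ?Q) ?Q HQ"
    by (rule continuous_compose_quotient_map)
  moreover have "HQ (0, C) = C" and "HQ (1, C) = ?q c" if C: "C \<in> topspace ?Q" for C
  proof -
    obtain x where x: "x \<in> topspace X" and C_eq: "C = ?q x"
      using C unfolding topspace_quot_topology by (blast elim: quotientE)
    show "HQ (0, C) = C"
      using HQ_class[of 0 x] class_eq[OF H0[OF x]] x C_eq by simp
    show "HQ (1, C) = ?q c"
      using HQ_class[of 1 x] class_eq[OF H1[OF x]] x C_eq by simp
  qed
  ultimately show ?thesis
    by (rule contractible_space_if_contracting_homotopy)
qed

lemma weakly_contractible_space_if_contractible:
  "contractible_space X \<Longrightarrow> topspace X \<noteq> {} \<Longrightarrow> weakly_contractible_space X"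
  unfolding weakly_contractible_space_def by (metis nullhomotopic_into_contractible_space)

lemma rtrancl_Un_converse_map:
  assumes "\<And>x y. (x, y) \<in> S \<Longrightarrow> (f x, f y) \<in> S"
    and "(x, y) \<in> (S \<union> S\<inverse>)\<^sup>*"
  shows "(f x, f y) \<in> (S \<union> S\<inverse>)\<^sup>*"
  using assms(2)
proof (induction rule: rtrancl_induct)
  case (step y z)
  then have "(f y, f z) \<in> S \<union> S\<inverse>" using assms(1) by blast
  with step.IH show ?case by (rule rtrancl_into_rtrancl)
qed simp

lemma equiv_rtrancl_Un_converse: "equiv UNIV ((S \<union> S\<inverse>)\<^sup>*)"
  unfolding equiv_def
  by (auto simp: refl_rtrancl trans_rtrancl sym_rtrancl sym_Un_converse)

lemma continuous_map_snd_sum_topology: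
  assumes "i \<in> I"
  shows "continuous_map (subtopology (sum_topology X I) ({i} \<times> topspace (X i))) (X i) snd"
proof -
  let ?S = "subtopology (sum_topology X I) ({i} \<times> topspace (X i))"
  have ts: "topspace ?S = {i} \<times> topspace (X i)"
    using assms by auto
  show ?thesis
    unfolding continuous_map_def
  proof (intro conjI allI impI)
    show "snd \<in> topspace ?S \<rightarrow> topspace (X i)"
      unfolding ts by auto
    fix U assume U: "openin (X i) U"
    have "{x \<in> topspace ?S. snd x \<in> U} = ({i} \<times> topspace (X i)) \<inter> Pair i ` U"
      unfolding ts using openin_subset[OF U] by auto
    moreover have "openin (sum_topology X I) (Pair i ` U)"
      using open_map_component_injection[OF assms] U unfolding open_map_def by blast
    ultimately show "openin ?S {x \<in> topspace ?S. snd x \<in> U}"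
      by (simp add: openin_subtopology_Int2)
  qed
qed

lemma continuous_map_prod_sum_topology:
  assumes g: "\<And>i. i \<in> I \<Longrightarrow> g i \<in> J"
    and h: "\<And>i. i \<in> I \<Longrightarrow> continuous_map (prod_topology Z (X i)) (Y (g i)) (h i)"
  shows "continuous_map (prod_topology Z (sum_topology X I)) (sum_topology Y J)
           (\<lambda>(z, i, x). (g i, h i (z, x)))"
proof (rule pasting_lemma[where T = "\<lambda>i. topspace Z \<times> ({i} \<times> topspace (X i))"
                          and f = "\<lambda>_. \<lambda>(z, i, x). (g i, h i (z, x))"])
  fix i assume i: "i \<in> I"
  let ?Xi = "subtopology (sum_topology X I) ({i} \<times> topspace (X i))"
  have "Pair i ` topspace (X i) = {i} \<times> topspace (X i)" by auto
  then have "openin (sum_topology X I) ({i} \<times> topspace (X i))"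
    using open_map_component_injection[OF i] by (metis open_map_def openin_topspace)
  then show "openin (prod_topology Z (sum_topology X I)) (topspace Z \<times> ({i} \<times> topspace (X i)))"
    by (simp add: openin_prod_Times_iff)
  have "continuous_map (prod_topology Z ?Xi) (prod_topology Z (X i)) (\<lambda>p. (fst p, snd (snd p)))"
  proof (rule continuous_map_pairedI)
    show "continuous_map (prod_topology Z ?Xi) (X i) (\<lambda>p. snd (snd p))"
      using continuous_map_compose[OF continuous_map_snd continuous_map_snd_sum_topology[OF i]]
      by (simp add: o_def)
  qed (rule continuous_map_fst)
  then have "continuous_map (prod_topology Z ?Xi) (sum_topology Y J)
               (Pair (g i) \<circ> h i \<circ> (\<lambda>p. (fst p, snd (snd p))))"
    using continuous_map_component_injection[OF g[OF i]] h[OF i]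
    by (intro continuous_map_compose)
  moreover have "subtopology (prod_topology Z (sum_topology X I)) (topspace Z \<times> ({i} \<times> topspace (X i)))
      = prod_topology Z ?Xi"
    by (simp add: subtopology_Times subtopology_subtopology)
  ultimately show "continuous_map (subtopology (prod_topology Z (sum_topology X I))
      (topspace Z \<times> ({i} \<times> topspace (X i)))) (sum_topology Y J) (\<lambda>(z, i, x). (g i, h i (z, x)))"
    by (auto elim!: continuous_map_eq)
qed fastforce+

lemma topspace_prod_simplex:
  "topspace (prod_simplex n) = (\<Pi>\<^sub>E i\<in>{..<length n}. standard_simplex (n!i))"
  by (simp add: prod_simplex_def)

text \<open>The point \<open>(1 - t) y + t v\<close> of \<open>\<Delta>^(n+1)\<close>, in every factor, where \<open>v\<close> is the new last vertex.\<close>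

definition cone_point :: "real \<Rightarrow> nat list \<Rightarrow> (nat \<Rightarrow> nat \<Rightarrow> real) \<Rightarrow> (nat \<Rightarrow> nat \<Rightarrow> real)" where
  "cone_point t n y = restrict (\<lambda>i j. if j = Suc (n!i) then t else (1 - t) * y i j) {..<length n}"

lemma cone_point_in_prod_simplex:
  assumes "t \<in> {0..1}" "y \<in> topspace (prod_simplex n)"
  shows "cone_point t n y \<in> topspace (prod_simplex (map Suc n))"
proof -
  have "(\<lambda>j. if j = Suc (n!i) then t else (1 - t) * y i j) \<in> standard_simplex (Suc (n!i))"
    if "i < length n" for i
  proof -
    have y: "\<And>j. 0 \<le> y i j \<and> y i j \<le> 1" "\<And>j. j > n!i \<Longrightarrow> y i j = 0" "(\<Sum>j\<le>n!i. y i j) = 1"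
      using assms(2) that by (auto simp: topspace_prod_simplex standard_simplex_def)
    have "(1 - t) * y i j \<le> 1" for j
      using assms(1) y(1)[of j] by (simp add: mult_le_one)
    moreover have "(\<Sum>j\<le>Suc (n!i). if j = Suc (n!i) then t else (1 - t) * y i j) = 1"
      using y(3) by (simp add: sum_distrib_left[symmetric])
    ultimately show ?thesis
      using assms(1) y by (auto simp: standard_simplex_def)
  qed
  then show ?thesis
    by (auto simp: topspace_prod_simplex cone_point_def PiE_iff)
qed

lemma continuous_map_prod_simplex_coordinate:
  assumes "i < length n"
  shows "continuous_map (prod_simplex n) euclideanreal (\<lambda>y. y i j)"
proof -
  have "continuous_map (prod_simplex n) (subtopology (powertop_real UNIV) (standard_simplex (n!i))) (\<lambda>y. y i)"
    unfolding prod_simplex_def using assms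
    by (metis continuous_map_product_projection lessThan_iff)
  moreover have "continuous_map (subtopology (powertop_real UNIV) (standard_simplex (n!i))) euclideanreal (\<lambda>z. z j)"
    by (rule continuous_map_from_subtopology) (metis continuous_map_product_projection UNIV_I)
  ultimately show ?thesis
    using continuous_map_compose[unfolded o_def] by blast
qed

lemma continuous_map_cone_point:
  "continuous_map (prod_topology (top_of_set {0..1}) (prod_simplex n)) (prod_simplex (map Suc n))
     (\<lambda>(t, y). cone_point t n y)"
proof -
  let ?Z = "prod_topology (top_of_set {0..1::real}) (prod_simplex n)"
  have t: "continuous_map ?Z euclideanreal fst"
    using continuous_map_compose[OF continuous_map_fst continuous_map_from_subtopology[OF continuous_map_id]]
    by (simp add: o_def)
  have y: "continuous_map ?Z euclideanreal (\<lambda>p. snd p i j)" if "i < length n" for i j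
    using continuous_map_compose[OF continuous_map_snd continuous_map_prod_simplex_coordinate[OF that]]
    by (simp add: o_def)
  have coordinate: "continuous_map ?Z euclideanreal (\<lambda>p. cone_point (fst p) n (snd p) i j)"
    if "i < length n" for i j
  proof (cases "j = Suc (n!i)")
    case True
    then show ?thesis using that t by (simp add: cone_point_def)
  next
    case False
    have "continuous_map ?Z euclideanreal (\<lambda>p. (1 - fst p) * snd p i j)"
      by (intro continuous_map_real_mult continuous_map_diff continuous_map_const[THEN iffD2] t y that) simp
    then show ?thesis using that False by (simp add: cone_point_def)
  qed
  have "continuous_map ?Z (subtopology (powertop_real UNIV) (standard_simplex (map Suc n ! i)))
          (\<lambda>p. cone_point (fst p) n (snd p) i)"
    if i: "i \<in> {..<length (map Suc n)}" for i
    unfolding continuous_map_in_subtopology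
  proof
    show "continuous_map ?Z (powertop_real UNIV) (\<lambda>p. cone_point (fst p) n (snd p) i)"
      unfolding continuous_map_componentwise_UNIV using coordinate i by simp
    show "(\<lambda>p. cone_point (fst p) n (snd p) i) \<in> topspace ?Z \<rightarrow> standard_simplex (map Suc n ! i)"
      using cone_point_in_prod_simplex i by (fastforce simp: topspace_prod_simplex PiE_iff)
  qed
  moreover have "(\<lambda>p. cone_point (fst p) n (snd p)) \<in> topspace ?Z \<rightarrow> extensional {..<length (map Suc n)}"
    by (auto simp: cone_point_def)
  ultimately show ?thesis
    unfolding prod_simplex_def[of "map Suc n"] continuous_map_componentwise case_prod_beta
    by blast
qed

section \<open>Cones in A\<close>

definition msA_cone :: "'p \<Rightarrow> nat list \<Rightarrow> (nat set list \<Rightarrow> 'p) \<Rightarrow> (nat set list \<Rightarrow> 'p)" where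
  "msA_cone tp n a =
     restrict (\<lambda>c. if \<exists>i<length n. Suc (n!i) \<in> c!i then tp else a c) (cells (map Suc n))"

lemma cells_map_Suc_imp_cells:
  assumes "c \<in> cells (map Suc n)" "\<not> (\<exists>i<length n. Suc (n!i) \<in> c!i)"
  shows "c \<in> cells n"
  using assms unfolding cells_def
  by (auto simp: subset_iff) (metis atMost_iff le_Suc_eq)

lemma cells_imp_cells_map_Suc: "c \<in> cells n \<Longrightarrow> c \<in> cells (map Suc n)"
  unfolding cells_def by (fastforce simp: subset_iff)

lemma msA_cone_in_msA:
  assumes top: "\<forall>x::'p::preorder. x \<le> tp" and a: "a \<in> msA n"
  shows "msA_cone tp n a \<in> msA (map Suc n)"
proof -
  have "msA_cone tp n a c \<le> msA_cone tp n a c'"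
    if c: "c \<in> cells (map Suc n)" "c' \<in> cells (map Suc n)" "cell_le c c'" for c c'
  proof (cases "\<exists>i<length n. Suc (n!i) \<in> c'!i")
    case True
    then show ?thesis using top c by (simp add: msA_cone_def)
  next
    case False
    moreover have "\<not> (\<exists>i<length n. Suc (n!i) \<in> c!i)"
    proof
      assume "\<exists>i<length n. Suc (n!i) \<in> c!i"
      then obtain i where i: "i < length n" "Suc (n!i) \<in> c!i" by blast
      moreover have "c!i \<subseteq> c'!i"
        using c i(1) unfolding cell_le_def cells_def by auto
      ultimately show False using False by blast
    qed
    ultimately show ?thesis
      using c a cells_map_Suc_imp_cells[of c n] cells_map_Suc_imp_cells[of c' n]
      by (auto simp: msA_cone_def msA_def)
  qed
  then show ?thesis unfolding msA_def msA_cone_def by auto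
qed

definition cone_mor :: "(nat \<Rightarrow> nat) \<Rightarrow> nat \<Rightarrow> nat \<Rightarrow> (nat \<Rightarrow> nat)" where
  "cone_mor \<theta> m n = restrict (\<lambda>j. if j = Suc m then Suc n else \<theta> j) {..Suc m}"

definition multi_cone_mor :: "nat list \<Rightarrow> nat list \<Rightarrow> (nat \<Rightarrow> nat) list \<Rightarrow> (nat \<Rightarrow> nat) list" where
  "multi_cone_mor m n \<theta>s = map (\<lambda>i. cone_mor (\<theta>s!i) (m!i) (n!i)) [0..<length n]"

lemma multi_cone_mor_nth [simp]:
  "i < length n \<Longrightarrow> multi_cone_mor m n \<theta>s ! i = cone_mor (\<theta>s!i) (m!i) (n!i)"
  by (simp add: multi_cone_mor_def)

lemma length_multi_cone_mor [simp]: "length (multi_cone_mor m n \<theta>s) = length n"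
  by (simp add: multi_cone_mor_def)

lemma delta_inj_mor_cone_mor:
  assumes "delta_inj_mor m n \<theta>"
  shows "delta_inj_mor (Suc m) (Suc n) (cone_mor \<theta> m n)"
proof -
  have \<theta>: "\<And>j. j \<le> m \<Longrightarrow> \<theta> j \<le> n" "mono_on {..m} \<theta>" "inj_on \<theta> {..m}"
    using assms by (auto simp: delta_inj_mor_def delta_mor_def PiE_iff)
  have "mono_on {..Suc m} (cone_mor \<theta> m n)"
  proof (rule mono_onI)
    fix r s assume rs: "r \<in> {..Suc m}" "s \<in> {..Suc m}" "r \<le> s"
    show "cone_mor \<theta> m n r \<le> cone_mor \<theta> m n s"
    proof (cases "s = Suc m")
      case True
      then show ?thesis using rs \<theta>(1)[of r] by (auto simp: cone_mor_def le_Suc_eq)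
    next
      case False
      then show ?thesis using rs \<theta>(2) by (auto simp: cone_mor_def mono_on_def le_Suc_eq)
    qed
  qed
  moreover have "inj_on (cone_mor \<theta> m n) {..Suc m}"
  proof (rule inj_onI)
    fix r s assume "r \<in> {..Suc m}" "s \<in> {..Suc m}" "cone_mor \<theta> m n r = cone_mor \<theta> m n s"
    then show "r = s"
      using \<theta>(1)[of r] \<theta>(1)[of s] \<theta>(3)
      by (auto simp: cone_mor_def le_Suc_eq inj_on_def split: if_splits)
  qed
  moreover have "cone_mor \<theta> m n \<in> {..Suc m} \<rightarrow>\<^sub>E {..Suc n}"
    using \<theta>(1) by (auto simp: cone_mor_def le_Suc_eq)
  ultimately show ?thesis by (simp add: delta_inj_mor_def delta_mor_def)
qed

lemma multi_inj_mor_multi_cone_mor: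
  "multi_inj_mor m n \<theta>s \<Longrightarrow> multi_inj_mor (map Suc m) (map Suc n) (multi_cone_mor m n \<theta>s)"
  unfolding multi_inj_mor_def by (auto intro: delta_inj_mor_cone_mor)

lemma cone_mor_image:
  assumes "\<And>j. j \<le> m \<Longrightarrow> \<theta> j \<le> n" "C \<subseteq> {..Suc m}"
  shows "Suc n \<in> cone_mor \<theta> m n ` C \<longleftrightarrow> Suc m \<in> C"
    and "Suc m \<notin> C \<Longrightarrow> cone_mor \<theta> m n ` C = \<theta> ` C"
proof -
  show "Suc n \<in> cone_mor \<theta> m n ` C \<longleftrightarrow> Suc m \<in> C"
  proof
    assume "Suc n \<in> cone_mor \<theta> m n ` C"
    then obtain j where "j \<in> C" "cone_mor \<theta> m n j = Suc n" by auto
    then show "Suc m \<in> C" using assms subsetD[OF assms(2)]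
      by (auto simp: cone_mor_def le_Suc_eq split: if_splits) (metis Suc_n_not_le_n)
  next
    assume "Suc m \<in> C"
    then show "Suc n \<in> cone_mor \<theta> m n ` C"
      by (auto simp: cone_mor_def image_iff intro!: bexI[of _ "Suc m"])
  qed
  assume "Suc m \<notin> C"
  then show "cone_mor \<theta> m n ` C = \<theta> ` C"
    using assms(2) by (auto simp: cone_mor_def subset_iff intro!: image_cong)
qed

lemma msA_face_msA_cone:
  assumes mor: "multi_mor m n \<theta>s"
  shows "msA_face (map Suc m) (map Suc n) (multi_cone_mor m n \<theta>s) (msA_cone tp n a)
       = msA_cone tp m (msA_face m n \<theta>s a)"
proof
  fix c
  have len: "length m = length n" "length \<theta>s = length n"
    and \<theta>: "\<And>i j. i < length n \<Longrightarrow> j \<le> m!i \<Longrightarrow> (\<theta>s!i) j \<le> n!i"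
    using mor by (auto simp: multi_mor_def delta_mor_def PiE_iff)
  show "msA_face (map Suc m) (map Suc n) (multi_cone_mor m n \<theta>s) (msA_cone tp n a) c
      = msA_cone tp m (msA_face m n \<theta>s a) c"
  proof (cases "c \<in> cells (map Suc m)")
    case False
    then show ?thesis by (simp add: msA_face_def msA_cone_def)
  next
    case c: True
    have c_len: "length c = length n" and c_sub: "\<And>i. i < length n \<Longrightarrow> c!i \<subseteq> {..Suc (m!i)}"
      using c len by (auto simp: cells_def)
    define c' where "c' = map2 (`) (multi_cone_mor m n \<theta>s) c"
    have c'_nth: "i < length n \<Longrightarrow> c'!i = cone_mor (\<theta>s!i) (m!i) (n!i) ` (c!i)" for i
      using c_len by (simp add: c'_def)
    have c': "c' \<in> cells (map Suc n)"
      unfolding c'_def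
    proof (rule map2_image_in_cells)
      show "(multi_cone_mor m n \<theta>s ! i) ` {..map Suc m ! i} \<subseteq> {..map Suc n ! i}"
        if "i < length (map Suc n)" for i
        using that \<theta> len by (auto simp: cone_mor_def le_Suc_eq)
    qed (use c len in auto)
    have apex_iff: "(\<exists>i<length n. Suc (n!i) \<in> c'!i) \<longleftrightarrow> (\<exists>i<length m. Suc (m!i) \<in> c!i)"
      using cone_mor_image(1)[OF \<theta> c_sub] c'_nth len by auto
    show ?thesis
    proof (cases "\<exists>i<length m. Suc (m!i) \<in> c!i")
      case True
      then show ?thesis
        using apex_iff c' c by (simp add: msA_face_def msA_cone_def c'_def[symmetric])
    next
      case False
      then have "c \<in> cells m" using cells_map_Suc_imp_cells[OF c] by blast
      moreover have "c' = map2 (`) \<theta>s c"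
        using False len c_len c_sub
        by (intro nth_equalityI) (auto simp: c'_nth c'_def cone_mor_image(2)[OF \<theta> c_sub])
      ultimately show ?thesis
        using False apex_iff c c' by (auto simp: msA_face_def msA_cone_def c'_def[symmetric])
    qed
  qed
qed

lemma multi_push_cone_point:
  assumes mor: "multi_mor m n \<theta>s"
  shows "multi_push (map Suc m) (multi_cone_mor m n \<theta>s) (cone_point t m y)
       = cone_point t n (multi_push m \<theta>s y)"
proof (intro ext)
  fix i j
  have len: "length m = length n" "length \<theta>s = length n"
    and \<theta>: "\<And>i j. i < length n \<Longrightarrow> j \<le> m!i \<Longrightarrow> (\<theta>s!i) j \<le> n!i"
    using mor by (auto simp: multi_mor_def delta_mor_def PiE_iff)
  show "multi_push (map Suc m) (multi_cone_mor m n \<theta>s) (cone_point t m y) i j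
      = cone_point t n (multi_push m \<theta>s y) i j"
  proof (cases "i < length n")
    case False
    then show ?thesis using len by (simp add: multi_push_def cone_point_def)
  next
    case i: True
    have old: "(\<Sum>l\<le>m!i. if cone_mor (\<theta>s!i) (m!i) (n!i) l = j
                   then (if l = Suc (m!i) then t else (1 - t) * y i l) else 0)
        = (\<Sum>l\<le>m!i. (1 - t) * (if (\<theta>s!i) l = j then y i l else 0))"
      by (rule sum.cong) (auto simp: cone_mor_def)
    have "l \<le> m!i \<Longrightarrow> (\<theta>s!i) l \<noteq> Suc (n!i)" for l
      using \<theta>[OF i, of l] by auto
    then show ?thesis
      using i len
      by (cases "j = Suc (n!i)")
         (simp_all add: multi_push_def cone_point_def simplex_push_def sum_distrib_left[symmetric] old,
          simp_all add: cone_mor_def)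
  qed
qed

section \<open>Contracting the realization of A\<close>

lemma topspace_realization_total:
  "topspace (realization_total k X) = {((n, x), y). length n = k \<and> x \<in> X n \<and> y \<in> topspace (prod_simplex n)}"
  by (auto simp: realization_total_def)

lemma realization_relI:
  assumes "length n = k" "multi_inj_mor m n \<theta>s" "x \<in> X n" "y \<in> topspace (prod_simplex m)"
  shows "(((m, d m n \<theta>s x), y), ((n, x), multi_push m \<theta>s y)) \<in> realization_rel k X d"
  using assms unfolding realization_rel_def by blast

lemma realization_relE:
  assumes "(p, p') \<in> realization_rel k X d"
  obtains m n \<theta>s x y where "p = ((m, d m n \<theta>s x), y)" "p' = ((n, x), multi_push m \<theta>s y)"
    and "length n = k" "multi_inj_mor m n \<theta>s" "x \<in> X n" "y \<in> topspace (prod_simplex m)"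
  using assms unfolding realization_rel_def by blast

type_synonym 'p msA_point = "(nat list \<times> (nat set list \<Rightarrow> 'p)) \<times> (nat \<Rightarrow> nat \<Rightarrow> real)"

abbreviation msA_rel :: "nat \<Rightarrow> ('p::preorder msA_point \<times> 'p msA_point) set" where
  "msA_rel k \<equiv> realization_rel k msA msA_face"

definition cone_homotopy :: "'p \<Rightarrow> real \<times> 'p msA_point \<Rightarrow> 'p msA_point" where
  "cone_homotopy tp = (\<lambda>(t, (n, a), y). ((map Suc n, msA_cone tp n a), cone_point t n y))"

lemma cone_homotopy_simp [simp]:
  "cone_homotopy tp (t, (n, a), y) = ((map Suc n, msA_cone tp n a), cone_point t n y)"
  by (simp add: cone_homotopy_def)

lemma continuous_map_cone_homotopy:
  assumes top: "\<forall>x::'p::preorder. x \<le> tp"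
  shows "continuous_map (prod_topology (top_of_set {0..1}) (realization_total k (msA :: _ \<Rightarrow> (_ \<Rightarrow> 'p) set)))
           (realization_total k msA) (cone_homotopy tp)"
proof -
  have "continuous_map (prod_topology (top_of_set {0..1}) (realization_total k (msA :: _ \<Rightarrow> (_ \<Rightarrow> 'p) set)))
          (realization_total k msA)
          (\<lambda>(t, i, y). ((map Suc (fst i), msA_cone tp (fst i) (snd i)), cone_point (fst (t, y)) (fst i) (snd (t, y))))"
    unfolding realization_total_def
    by (rule continuous_map_prod_sum_topology)
       (auto simp: msA_cone_in_msA[OF top] continuous_map_cone_point[unfolded case_prod_beta])
  then show ?thesis
    by (rule continuous_map_eq) (auto simp: topspace_realization_total)
qed

lemma msA_rel_cone_homotopy:
  assumes top: "\<forall>x::'p::preorder. x \<le> tp" and t: "t \<in> {0..1}"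
    and "(p, p') \<in> (msA_rel k :: ('p msA_point \<times> _) set)"
  shows "(cone_homotopy tp (t, p), cone_homotopy tp (t, p')) \<in> msA_rel k"
proof -
  obtain m n \<theta>s a y where p: "p = ((m, msA_face m n \<theta>s a), y)" "p' = ((n, a), multi_push m \<theta>s y)"
    and hyps: "length n = k" "multi_inj_mor m n \<theta>s" "a \<in> msA n" "y \<in> topspace (prod_simplex m)"
    using assms(3) by (rule realization_relE)
  have mor: "multi_mor m n \<theta>s"
    using hyps(2) by (rule multi_inj_mor_imp_multi_mor)
  have "(((map Suc m, msA_face (map Suc m) (map Suc n) (multi_cone_mor m n \<theta>s) (msA_cone tp n a)),
           cone_point t m y),
         ((map Suc n, msA_cone tp n a), multi_push (map Suc m) (multi_cone_mor m n \<theta>s) (cone_point t m y)))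
        \<in> msA_rel k"
    using hyps t
    by (intro realization_relI)
       (simp_all add: multi_inj_mor_multi_cone_mor msA_cone_in_msA[OF top] cone_point_in_prod_simplex)
  then show ?thesis
    by (simp add: p msA_face_msA_cone[OF mor] multi_push_cone_point[OF mor])
qed

lemma msA_rel_cone_homotopy_0:
  assumes top: "\<forall>x::'p::preorder. x \<le> tp"
    and p: "p \<in> topspace (realization_total k (msA :: _ \<Rightarrow> (_ \<Rightarrow> 'p) set))"
  shows "(p, cone_homotopy tp (0, p)) \<in> msA_rel k"
proof -
  obtain n a y where p_eq: "p = ((n, a), y)"
    and hyps: "length n = k" "a \<in> msA n" "y \<in> topspace (prod_simplex n)"
    using p unfolding topspace_realization_total by auto
  have inj: "multi_inj_mor n (map Suc n) (multi_id n)"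
    unfolding multi_inj_mor_def multi_id_def delta_inj_mor_def delta_mor_def
    by (auto simp: mono_on_def inj_on_def)
  have face: "msA_face n (map Suc n) (multi_id n) (msA_cone tp n a) = a"
  proof
    fix c
    show "msA_face n (map Suc n) (multi_id n) (msA_cone tp n a) c = a c"
    proof (cases "c \<in> cells n")
      case True
      moreover have "\<not> (\<exists>i<length n. Suc (n!i) \<in> c!i)"
        using True unfolding cells_def by fastforce
      ultimately show ?thesis
        by (auto simp: msA_face_def msA_cone_def map2_image_multi_id cells_imp_cells_map_Suc)
    qed (simp add: msA_face_def msA_undefined[OF hyps(2)])
  qed
  have push: "multi_push n (multi_id n) y = cone_point 0 n y"
  proof (intro ext)
    fix i j
    show "multi_push n (multi_id n) y i j = cone_point 0 n y i j"
    proof (cases "i < length n")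
      case True
      then have "\<And>j. j > n!i \<Longrightarrow> y i j = 0"
        using hyps(3) by (auto simp: topspace_prod_simplex standard_simplex_def)
      then show ?thesis
        using True by (auto simp: multi_push_def cone_point_def simplex_push_def multi_id_def not_le)
    qed (simp add: multi_push_def cone_point_def)
  qed
  have "(((n, msA_face n (map Suc n) (multi_id n) (msA_cone tp n a)), y),
         ((map Suc n, msA_cone tp n a), multi_push n (multi_id n) y)) \<in> msA_rel k"
    using hyps by (intro realization_relI inj msA_cone_in_msA[OF top]) simp_all
  then show ?thesis
    by (simp add: p_eq face push)
qed

definition cone_apex :: "'p \<Rightarrow> nat \<Rightarrow> 'p msA_point" where
  "cone_apex tp k = ((replicate k 0, restrict (\<lambda>_. tp) (cells (replicate k 0))),
                     restrict (\<lambda>i j. if j = 0 then 1 else 0) {..<k})"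

definition multi_apex_mor :: "nat list \<Rightarrow> (nat \<Rightarrow> nat) list" where
  "multi_apex_mor n = map (\<lambda>j. restrict (\<lambda>_. Suc j) {..0}) n"

lemma cone_apex_in_topspace:
  "cone_apex tp k \<in> topspace (realization_total k (msA :: _ \<Rightarrow> (_ \<Rightarrow> 'p::preorder) set))"
  by (auto simp: cone_apex_def topspace_realization_total msA_def topspace_prod_simplex standard_simplex_def)

lemma msA_rel_cone_homotopy_1:
  assumes top: "\<forall>x::'p::preorder. x \<le> tp" and k: "k \<ge> 1"
    and p: "p \<in> topspace (realization_total k (msA :: _ \<Rightarrow> (_ \<Rightarrow> 'p) set))"
  shows "(cone_apex tp k, cone_homotopy tp (1, p)) \<in> msA_rel k"
proof -
  obtain n a y where p_eq: "p = ((n, a), y)"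
    and hyps: "length n = k" "a \<in> msA n" "y \<in> topspace (prod_simplex n)"
    using p unfolding topspace_realization_total by auto
  let ?vertex = "restrict (\<lambda>i j. if j = 0 then 1 else 0) {..<k} :: nat \<Rightarrow> nat \<Rightarrow> real"
  have inj: "multi_inj_mor (replicate k 0) (map Suc n) (multi_apex_mor n)"
    using hyps(1) unfolding multi_inj_mor_def multi_apex_mor_def delta_inj_mor_def delta_mor_def
    by (auto simp: mono_on_def inj_on_def)
  have face: "msA_face (replicate k 0) (map Suc n) (multi_apex_mor n) (msA_cone tp n a)
      = restrict (\<lambda>_. tp) (cells (replicate k 0))"
  proof
    fix c
    show "msA_face (replicate k 0) (map Suc n) (multi_apex_mor n) (msA_cone tp n a) c
        = restrict (\<lambda>_. tp) (cells (replicate k 0)) c"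
    proof (cases "c \<in> cells (replicate k 0)")
      case True
      then have "length c = k" and "\<And>i. i < k \<Longrightarrow> c!i = {0}"
        unfolding cells_def by auto
      then have apex: "map2 (`) (multi_apex_mor n) c ! i = {Suc (n!i)}" if "i < k" for i
        using that hyps(1) by (simp add: multi_apex_mor_def)
      have "map2 (`) (multi_apex_mor n) c \<in> cells (map Suc n)"
        using \<open>length c = k\<close> hyps(1) apex by (auto simp: cells_def multi_apex_mor_def)
      moreover have "\<exists>i<length n. Suc (n!i) \<in> map2 (`) (multi_apex_mor n) c ! i"
        using apex k hyps(1) by (intro exI[of _ 0]) auto
      ultimately show ?thesis
        using True by (simp add: msA_face_def msA_cone_def)
    qed (simp add: msA_face_def)
  qed
  have "?vertex \<in> topspace (prod_simplex (replicate k 0))"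
    by (auto simp: topspace_prod_simplex standard_simplex_def)
  moreover have "multi_push (replicate k 0) (multi_apex_mor n) ?vertex = cone_point 1 n y"
  proof (intro ext)
    fix i j
    show "multi_push (replicate k 0) (multi_apex_mor n) ?vertex i j = cone_point 1 n y i j"
      using hyps(1) by (cases "i < k") (simp_all add: multi_push_def cone_point_def simplex_push_def multi_apex_mor_def)
  qed
  moreover have "(((replicate k 0, msA_face (replicate k 0) (map Suc n) (multi_apex_mor n) (msA_cone tp n a)),
                    ?vertex),
                   ((map Suc n, msA_cone tp n a), multi_push (replicate k 0) (multi_apex_mor n) ?vertex))
                  \<in> msA_rel k"
    if "?vertex \<in> topspace (prod_simplex (replicate k 0))"
    using hyps by (intro realization_relI inj msA_cone_in_msA[OF top] that) simp_all
  ultimately show ?thesis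
    by (simp add: p_eq face cone_apex_def)
qed

theorem contractible_space_realization_msA:
  assumes top: "\<forall>x::'p::preorder. x \<le> tp" and k: "k \<ge> 1"
  shows "contractible_space (geometric_realization k (msA :: _ \<Rightarrow> (_ \<Rightarrow> 'p) set) msA_face)"
  unfolding geometric_realization_def
proof (rule contractible_space_quot_topology[OF equiv_rtrancl_Un_converse continuous_map_cone_homotopy[OF top]])
  show "(cone_homotopy tp (t, p), cone_homotopy tp (t, p')) \<in> (msA_rel k \<union> (msA_rel k)\<inverse>)\<^sup>*"
    if "t \<in> {0..1}" "(p, p') \<in> (msA_rel k \<union> (msA_rel k)\<inverse>)\<^sup>*" for t p p'
    using msA_rel_cone_homotopy[OF top that(1)] that(2)
    by (rule rtrancl_Un_converse_map[where f = "\<lambda>q. cone_homotopy tp (t, q)"])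
  show "(p, cone_homotopy tp (0, p)) \<in> (msA_rel k \<union> (msA_rel k)\<inverse>)\<^sup>*"
    if "p \<in> topspace (realization_total k msA)" for p
    using msA_rel_cone_homotopy_0[OF top that] by blast
  show "(cone_apex tp k, cone_homotopy tp (1, p)) \<in> (msA_rel k \<union> (msA_rel k)\<inverse>)\<^sup>*"
    if "p \<in> topspace (realization_total k msA)" for p
    using msA_rel_cone_homotopy_1[OF top k that] by blast
qed

lemma topspace_geometric_realization_nonempty:
  "topspace (geometric_realization k (msA :: _ \<Rightarrow> (_ \<Rightarrow> 'p::preorder) set) msA_face) \<noteq> {}"
  using cone_apex_in_topspace[of undefined k]
  unfolding geometric_realization_def topspace_quot_topology by (blast intro: quotientI)

theorem lemma10p3:
  fixes top :: "'p::preorder" and k :: nat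
  assumes "\<forall>x::'p. x \<le> top"
  shows "has_compatible_degeneracies k (msA :: nat list \<Rightarrow> (nat set list \<Rightarrow> 'p) set) msA_face \<and>
         (k \<ge> 1 \<longrightarrow> weakly_contractible_space
            (geometric_realization k (msA :: nat list \<Rightarrow> (nat set list \<Rightarrow> 'p) set) msA_face))"
  using has_compatible_degeneracies_msA contractible_space_realization_msA[OF assms]
    topspace_geometric_realization_nonempty weakly_contractible_space_if_contractible
  by blast

end
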